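(* Let \(S\) be an inverse semigroup with zero and unit. The category \(\mathsf{Top}^S\) of actions of \(S\) on topological spaces (with \(S\)-equivariant continuous maps) and the category \(\mathsf{Top}^{\mathcal G(S)}\) of actions of the groupoid \(\mathcal G(S)\) on topological spaces (with \(\mathcal G(S)\)-equivariant maps) are isomorphic.
   Context: Inverse semigroups have zero \(0\) and unit \(1\); homomorphisms preserve them. \(E=E(S)\) is the idempotent semilattice (\(e\le f\iff ef=e\)). A character on \(E\) is a map \(\varphi\colon E\to\{0,1\}\) with \(\varphi(0)=0\), \(\varphi(1)=1\), \(\varphi(ef)=\varphi(e)\varphi(f)\). \(\hat E\) is the set of characters, with the topology generated by the sets \(U_e=\{\varphi:\varphi(e)=1\}\). \(S\) acts on \(\hat E\) by \(c_g\colon U_{g^*g}\to U_{gg^*}\), \(g\cdot\varphi(e)=\varphi(g^*eg)\). The groupoid \(\mathcal G(S)\) has object space \(\hat E\). Its arrows are equivalence classes \([s,\varphi]\) of pairs \((s,\varphi)\) with \(s\in S\) and \(\varphi\in U_{s^*s}\), where \((s,\varphi)\sim(t,\psi)\) iff \(\varphi=\psi\) and there is \(e\in E\) with \(se=te\) and \(\varphi(e)=1\). The structure maps are \(\mathrm s([s,\varphi])=\varphi\), \(\mathrm r([s,\varphi])=s\cdot\varphi\), \([s,\varphi][t,\psi]=[st,\psi]\) if \(\varphi=t\cdot\psi\), \([s,\varphi]^{-1}=[s^*,s\cdot\varphi]\), and units \([1,\varphi]\). The arrow space carries the smallest topology in which all sets \(\{[s,\varphi]:\varphi\in U\}\), for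 \(s\in S\) and \(U\subseteq U_{s^*s}\) open, are open. An action of \(S\) on a space \(X\) is a unit- and zero-preserving homomorphism from \(S\) to the inverse semigroup of partial homeomorphisms (homeomorphisms between open subsets) of \(X\). A map \(f\) between \(S\)-spaces is \(S\)-equivariant if \(s\cdot x\) is defined iff \(s\cdot f(x)\) is, and then \(f(s\cdot x)=s\cdot f(x)\). An action of a topological groupoid \(\mathcal G\) on a space \(X\) is a continuous anchor map \(\varrho\colon X\to\mathcal G^{(0)}\) together with a continuous map \(\{(g,x):\mathrm s(g)=\varrho(x)\}\to X\), \((g,x)\mapsto g\cdot x\), satisfying \(\varrho(g\cdot x)=\mathrm r(g)\), \(g_1\cdot(g_2\cdot x)=(g_1g_2)\cdot x\) when defined, and \(1_{\varrho(x)}\cdot x=x\). A map \(f\colon X\to Y\) is \(\mathcal G\)-equivariant if \(\varrho_Y\circ f=\varrho_X\) and \(f(g\cdot x)=g\cdot f(x)\) whenever defined. Spaces need not be Hausdorff. *)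

theory Defs
  imports "HOL-Analysis.Analysis"
begin

text \<open>An inverse semigroup S is represented by a type 'a (the whole type is the carrier)
  with multiplication m, zero z and unit u.\<close>

definition inverse_semigroup01 :: "('a \<Rightarrow> 'a \<Rightarrow> 'a) \<Rightarrow> 'a \<Rightarrow> 'a \<Rightarrow> bool" where
  "inverse_semigroup01 m z u \<longleftrightarrow>
     (\<forall>a b c. m (m a b) c = m a (m b c)) \<and>
     (\<forall>s. \<exists>!t. m (m s t) s = s \<and> m (m t s) t = t) \<and>
     (\<forall>s. m z s = z \<and> m s z = z) \<and>
     (\<forall>s. m u s = s \<and> m s u = s)"

definition istar :: "('a \<Rightarrow> 'a \<Rightarrow> 'a) \<Rightarrow> 'a \<Rightarrow> 'a" where
  "istar m s = (THE t. m (m s t) s = s \<and> m (m t s) t = t)"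

definition idems :: "('a \<Rightarrow> 'a \<Rightarrow> 'a) \<Rightarrow> 'a set" where
  "idems m = {e. m e e = e}"

text \<open>A character is a map E \<rightarrow> {0,1}; we represent it as a predicate on 'a which is
  False outside E (so that characters are determined by their values on E).\<close>

definition chars :: "('a \<Rightarrow> 'a \<Rightarrow> 'a) \<Rightarrow> 'a \<Rightarrow> 'a \<Rightarrow> ('a \<Rightarrow> bool) set" where
  "chars m z u = {\<phi>. (\<forall>x. \<phi> x \<longrightarrow> x \<in> idems m) \<and> \<not> \<phi> z \<and> \<phi> u \<and>
      (\<forall>e\<in>idems m. \<forall>f\<in>idems m. \<phi> (m e f) = (\<phi> e \<and> \<phi> f))}"

definition Uset :: "('a \<Rightarrow> 'a \<Rightarrow> 'a) \<Rightarrow> 'a \<Rightarrow> 'a \<Rightarrow> 'a \<Rightarrow> ('a \<Rightarrow> bool) set" where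
  "Uset m z u e = {\<phi> \<in> chars m z u. \<phi> e}"

definition Ehat_top :: "('a \<Rightarrow> 'a \<Rightarrow> 'a) \<Rightarrow> 'a \<Rightarrow> 'a \<Rightarrow> ('a \<Rightarrow> bool) topology" where
  "Ehat_top m z u = topology_generated_by {Uset m z u e | e. e \<in> idems m}"

text \<open>The action of S on \<open>\<hat>E\<close>: \<open>(g\<cdot>\<phi>)(e) = \<phi>(g\<^sup>*eg)\<close> for \<open>\<phi> \<in> U_{g\<^sup>*g}\<close>.\<close>

definition char_act :: "('a \<Rightarrow> 'a \<Rightarrow> 'a) \<Rightarrow> 'a \<Rightarrow> ('a \<Rightarrow> bool) \<Rightarrow> ('a \<Rightarrow> bool)" where
  "char_act m g \<phi> = (\<lambda>e. e \<in> idems m \<and> \<phi> (m (m (istar m g) e) g))"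

text \<open>An arrow is the equivalence class of a pair (s, \<phi>) with \<open>\<phi> \<in> U_{s\<^sup>*s}\<close>.\<close>

definition germ :: "('a \<Rightarrow> 'a \<Rightarrow> 'a) \<Rightarrow> 'a \<Rightarrow> 'a \<Rightarrow> 'a \<Rightarrow> ('a \<Rightarrow> bool) \<Rightarrow> ('a \<times> ('a \<Rightarrow> bool)) set" where
  "germ m z u s \<phi> = {(t, \<phi>) | t. \<phi> \<in> Uset m z u (m (istar m t) t) \<and>
                         (\<exists>e\<in>idems m. \<phi> e \<and> m s e = m t e)}"

definition arrows :: "('a \<Rightarrow> 'a \<Rightarrow> 'a) \<Rightarrow> 'a \<Rightarrow> 'a \<Rightarrow> ('a \<times> ('a \<Rightarrow> bool)) set set" where
  "arrows m z u = {germ m z u s \<phi> | s \<phi>. \<phi> \<in> Uset m z u (m (istar m s) s)}"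

definition rep :: "('a \<times> ('a \<Rightarrow> bool)) set \<Rightarrow> 'a \<times> ('a \<Rightarrow> bool)" where
  "rep g = (SOME p. p \<in> g)"

definition gsrc :: "('a \<times> ('a \<Rightarrow> bool)) set \<Rightarrow> ('a \<Rightarrow> bool)" where
  "gsrc g = snd (rep g)"

definition grng :: "('a \<Rightarrow> 'a \<Rightarrow> 'a) \<Rightarrow> ('a \<times> ('a \<Rightarrow> bool)) set \<Rightarrow> ('a \<Rightarrow> bool)" where
  "grng m g = char_act m (fst (rep g)) (snd (rep g))"

text \<open>\<open>[s,\<phi>][t,\<psi>] = [st,\<psi>]\<close> (used only when \<open>\<phi> = t\<cdot>\<psi>\<close>).\<close>
definition gmult :: "('a \<Rightarrow> 'a \<Rightarrow> 'a) \<Rightarrow> 'a \<Rightarrow> 'a \<Rightarrow> ('a \<times> ('a \<Rightarrow> bool)) set \<Rightarrow>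
                      ('a \<times> ('a \<Rightarrow> bool)) set \<Rightarrow> ('a \<times> ('a \<Rightarrow> bool)) set" where
  "gmult m z u g h = germ m z u (m (fst (rep g)) (fst (rep h))) (snd (rep h))"

definition gunit :: "('a \<Rightarrow> 'a \<Rightarrow> 'a) \<Rightarrow> 'a \<Rightarrow> 'a \<Rightarrow> ('a \<Rightarrow> bool) \<Rightarrow> ('a \<times> ('a \<Rightarrow> bool)) set" where
  "gunit m z u \<phi> = germ m z u u \<phi>"

definition arrows_top :: "('a \<Rightarrow> 'a \<Rightarrow> 'a) \<Rightarrow> 'a \<Rightarrow> 'a \<Rightarrow> ('a \<times> ('a \<Rightarrow> bool)) set topology" where
  "arrows_top m z u = topology_generated_by
     {{germ m z u s \<phi> | \<phi>. \<phi> \<in> U} | s U.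
        U \<subseteq> Uset m z u (m (istar m s) s) \<and> openin (Ehat_top m z u) U}"

text \<open>An action of S on X: for each s a partial homeomorphism \<open>A s\<close> with open domain
  \<open>D s\<close> and open image, such that \<open>s \<mapsto> (D s, A s)\<close> is a homomorphism into the inverse
  semigroup of partial homeomorphisms (composition of partial maps), preserving zero
  (empty map) and unit (identity of X).\<close>

definition S_action :: "('a \<Rightarrow> 'a \<Rightarrow> 'a) \<Rightarrow> 'a \<Rightarrow> 'a \<Rightarrow> 'x topology \<Rightarrow>
                        ('a \<Rightarrow> 'x set) \<Rightarrow> ('a \<Rightarrow> 'x \<Rightarrow> 'x) \<Rightarrow> bool" where
  "S_action m z u X D A \<longleftrightarrow>
     (\<forall>s. openin X (D s) \<and> openin X (A s ` D s) \<and>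
          homeomorphic_map (subtopology X (D s)) (subtopology X (A s ` D s)) (A s)) \<and>
     (\<forall>s t. D (m s t) = {x \<in> D t. A t x \<in> D s} \<and>
            (\<forall>x \<in> D (m s t). A (m s t) x = A s (A t x))) \<and>
     D z = {} \<and> D u = topspace X \<and> (\<forall>x\<in>topspace X. A u x = x)"

definition S_action_eq :: "('a \<Rightarrow> 'x set) \<Rightarrow> ('a \<Rightarrow> 'x \<Rightarrow> 'x) \<Rightarrow>
                           ('a \<Rightarrow> 'x set) \<Rightarrow> ('a \<Rightarrow> 'x \<Rightarrow> 'x) \<Rightarrow> bool" where
  "S_action_eq D A D' A' \<longleftrightarrow> (\<forall>s. D s = D' s \<and> (\<forall>x\<in>D s. A s x = A' s x))"

definition S_equivariant :: "('a \<Rightarrow> 'x set) \<Rightarrow> ('a \<Rightarrow> 'x \<Rightarrow> 'x) \<Rightarrow>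
      ('a \<Rightarrow> 'y set) \<Rightarrow> ('a \<Rightarrow> 'y \<Rightarrow> 'y) \<Rightarrow> 'x topology \<Rightarrow> ('x \<Rightarrow> 'y) \<Rightarrow> bool" where
  "S_equivariant D A D' A' X f \<longleftrightarrow>
     (\<forall>s. \<forall>x\<in>topspace X. (x \<in> D s \<longleftrightarrow> f x \<in> D' s) \<and>
                          (x \<in> D s \<longrightarrow> f (A s x) = A' s (f x)))"

definition G_action :: "('a \<Rightarrow> 'a \<Rightarrow> 'a) \<Rightarrow> 'a \<Rightarrow> 'a \<Rightarrow> 'x topology \<Rightarrow>
      ('x \<Rightarrow> ('a \<Rightarrow> bool)) \<Rightarrow> (('a \<times> ('a \<Rightarrow> bool)) set \<Rightarrow> 'x \<Rightarrow> 'x) \<Rightarrow> bool" where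
  "G_action m z u X \<rho> act \<longleftrightarrow>
     continuous_map X (Ehat_top m z u) \<rho> \<and>
     continuous_map
       (subtopology (prod_topology (arrows_top m z u) X)
          {(g, x). g \<in> arrows m z u \<and> x \<in> topspace X \<and> gsrc g = \<rho> x})
       X (\<lambda>(g, x). act g x) \<and>
     (\<forall>g x. g \<in> arrows m z u \<and> x \<in> topspace X \<and> gsrc g = \<rho> x \<longrightarrow>
            \<rho> (act g x) = grng m g) \<and>
     (\<forall>g h x. g \<in> arrows m z u \<and> h \<in> arrows m z u \<and> x \<in> topspace X \<and>
              gsrc h = \<rho> x \<and> gsrc g = grng m h \<longrightarrow>
              act g (act h x) = act (gmult m z u g h) x) \<and>
     (\<forall>x\<in>topspace X. act (gunit m z u (\<rho> x)) x = x)"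

definition G_action_eq :: "('a \<Rightarrow> 'a \<Rightarrow> 'a) \<Rightarrow> 'a \<Rightarrow> 'a \<Rightarrow> 'x topology \<Rightarrow>
      ('x \<Rightarrow> ('a \<Rightarrow> bool)) \<Rightarrow> (('a \<times> ('a \<Rightarrow> bool)) set \<Rightarrow> 'x \<Rightarrow> 'x) \<Rightarrow>
      ('x \<Rightarrow> ('a \<Rightarrow> bool)) \<Rightarrow> (('a \<times> ('a \<Rightarrow> bool)) set \<Rightarrow> 'x \<Rightarrow> 'x) \<Rightarrow> bool" where
  "G_action_eq m z u X \<rho> act \<rho>' act' \<longleftrightarrow>
     (\<forall>x\<in>topspace X. \<rho> x = \<rho>' x \<and>
        (\<forall>g\<in>arrows m z u. gsrc g = \<rho> x \<longrightarrow> act g x = act' g x))"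

definition G_equivariant :: "('a \<Rightarrow> 'a \<Rightarrow> 'a) \<Rightarrow> 'a \<Rightarrow> 'a \<Rightarrow> 'x topology \<Rightarrow>
      ('x \<Rightarrow> ('a \<Rightarrow> bool)) \<Rightarrow> (('a \<times> ('a \<Rightarrow> bool)) set \<Rightarrow> 'x \<Rightarrow> 'x) \<Rightarrow>
      ('y \<Rightarrow> ('a \<Rightarrow> bool)) \<Rightarrow> (('a \<times> ('a \<Rightarrow> bool)) set \<Rightarrow> 'y \<Rightarrow> 'y) \<Rightarrow> ('x \<Rightarrow> 'y) \<Rightarrow> bool" where
  "G_equivariant m z u X \<rho> act \<rho>' act' f \<longleftrightarrow>
     (\<forall>x\<in>topspace X. \<rho>' (f x) = \<rho> x \<and>
        (\<forall>g\<in>arrows m z u. gsrc g = \<rho> x \<longrightarrow> f (act g x) = act' g (f x)))"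

section \<open>The two functors (identity on underlying spaces and on maps)\<close>

definition toG_anchor :: "('a \<Rightarrow> 'a \<Rightarrow> 'a) \<Rightarrow> ('a \<Rightarrow> 'x set) \<Rightarrow> 'x \<Rightarrow> ('a \<Rightarrow> bool)" where
  "toG_anchor m D x = (\<lambda>e. e \<in> idems m \<and> x \<in> D e)"

definition toG_act :: "('a \<Rightarrow> 'x \<Rightarrow> 'x) \<Rightarrow> ('a \<times> ('a \<Rightarrow> bool)) set \<Rightarrow> 'x \<Rightarrow> 'x" where
  "toG_act A g x = A (fst (rep g)) x"

definition toS_dom :: "('a \<Rightarrow> 'a \<Rightarrow> 'a) \<Rightarrow> 'x topology \<Rightarrow> ('x \<Rightarrow> ('a \<Rightarrow> bool)) \<Rightarrow> 'a \<Rightarrow> 'x set" where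
  "toS_dom m X \<rho> s = {x \<in> topspace X. \<rho> x (m (istar m s) s)}"

definition toS_act :: "('a \<Rightarrow> 'a \<Rightarrow> 'a) \<Rightarrow> 'a \<Rightarrow> 'a \<Rightarrow> ('x \<Rightarrow> ('a \<Rightarrow> bool)) \<Rightarrow>
      (('a \<times> ('a \<Rightarrow> bool)) set \<Rightarrow> 'x \<Rightarrow> 'x) \<Rightarrow> 'a \<Rightarrow> 'x \<Rightarrow> 'x" where
  "toS_act m z u \<rho> act s x = act (germ m z u s (\<rho> x)) x"

end

theory Submission
  imports Defs
begin

text \<open>
  Both functors are the identity on spaces and on maps. An S-action yields the anchor
  \<open>\<rho>(x) = {e \<in> E. x \<in> dom e}\<close>, a character because \<open>dom (ef) = dom e \<inter> dom f\<close>, and a germ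
  acts by \<open>[s,\<rho> x]\<cdot>x = s\<cdot>x\<close>; this is well defined because \<open>se = te\<close> with \<open>x \<in> dom e\<close> forces
  \<open>s\<cdot>x = t\<cdot>x\<close>, and continuous because the sets of germs of a fixed \<open>s\<close> are open. Conversely a
  \<open>\<G>(S)\<close>-action yields \<open>s\<cdot>x = [s,\<rho> x]\<cdot>x\<close> on \<open>\<rho>\<^sup>-\<^sup>1(U\<^bsub>s\<^sup>*s\<^esub>)\<close>: the groupoid laws give the
  homomorphism property, and continuity of \<open>x \<mapsto> [s,\<rho> x]\<close> makes each \<open>s\<close> a partial
  homeomorphism with inverse \<open>s\<^sup>*\<close>. On both sides equivariance says the same thing: \<open>f\<close>
  preserves anchors (equivalently, all domains) and commutes with every \<open>s\<close>.
\<close>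

locale inverse_semigroup =
  fixes m :: "'a \<Rightarrow> 'a \<Rightarrow> 'a" (infixl "\<cdot>" 70) and z u :: 'a
  assumes inverse_semigroup: "inverse_semigroup01 m z u"
begin

lemma assoc: "a \<cdot> b \<cdot> c = a \<cdot> (b \<cdot> c)"
  using inverse_semigroup unfolding inverse_semigroup01_def by blast

lemma zero_mult [simp]: "z \<cdot> s = z" and mult_zero [simp]: "s \<cdot> z = z"
  and unit_mult [simp]: "u \<cdot> s = s" and mult_unit [simp]: "s \<cdot> u = s"
  using inverse_semigroup unfolding inverse_semigroup01_def by blast+

lemma ex1_inverse: "\<exists>!t. s \<cdot> t \<cdot> s = s \<and> t \<cdot> s \<cdot> t = t"
  using inverse_semigroup unfolding inverse_semigroup01_def by blast

lemma mult_istar_mult: "s \<cdot> istar m s \<cdot> s = s"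
  and istar_mult_istar: "istar m s \<cdot> s \<cdot> istar m s = istar m s"
  using theI'[OF ex1_inverse[of s]] unfolding istar_def by blast+

lemma istar_unique: "s \<cdot> t \<cdot> s = s \<Longrightarrow> t \<cdot> s \<cdot> t = t \<Longrightarrow> istar m s = t"
  using ex1_inverse[of s] mult_istar_mult[of s] istar_mult_istar[of s] by blast

lemma istar_idem: "e \<cdot> e = e \<Longrightarrow> istar m e = e"
  by (rule istar_unique) simp_all

lemma istar_istar [simp]: "istar m (istar m s) = s"
  by (rule istar_unique) (use mult_istar_mult istar_mult_istar in metis)+

lemma mult_istar_mult_cancel: "s \<cdot> (istar m s \<cdot> (s \<cdot> y)) = s \<cdot> y"
  by (metis assoc mult_istar_mult)

lemma istar_mult_istar_cancel: "istar m s \<cdot> (s \<cdot> (istar m s \<cdot> y)) = istar m s \<cdot> y"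
  by (metis assoc istar_mult_istar)

lemma idem_mult_idem:
  assumes e: "e \<cdot> e = e" and f: "f \<cdot> f = f"
  shows "e \<cdot> f \<cdot> (e \<cdot> f) = e \<cdot> f"
proof -
  define x where "x = istar m (e \<cdot> f)"
  have x: "e \<cdot> f \<cdot> x \<cdot> (e \<cdot> f) = e \<cdot> f" "x \<cdot> (e \<cdot> f) \<cdot> x = x"
    unfolding x_def using mult_istar_mult istar_mult_istar by blast+
  \<comment> \<open>\<open>f x e\<close> is again an inverse of \<open>e f\<close>, so it equals \<open>x\<close>; this makes \<open>x\<close> idempotent\<close>
  have "e \<cdot> f \<cdot> (f \<cdot> x \<cdot> e) \<cdot> (e \<cdot> f) = e \<cdot> f" "f \<cdot> x \<cdot> e \<cdot> (e \<cdot> f) \<cdot> (f \<cdot> x \<cdot> e) = f \<cdot> x \<cdot> e"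
    using x e f by (metis assoc)+
  then have "x = f \<cdot> x \<cdot> e"
    unfolding x_def by (rule istar_unique)
  then have "x \<cdot> x = x"
    using x e f by (metis assoc)
  then have "istar m x = x"
    by (rule istar_idem)
  then show ?thesis
    using \<open>x \<cdot> x = x\<close> unfolding x_def by simp
qed

lemma idems_iff: "e \<in> idems m \<longleftrightarrow> e \<cdot> e = e"
  by (simp add: idems_def)

lemma idems_commute:
  assumes "e \<in> idems m" "f \<in> idems m"
  shows "e \<cdot> f = f \<cdot> e"
proof -
  have e: "e \<cdot> e = e" and f: "f \<cdot> f = f"
    using assms by (simp_all add: idems_iff)
  have ef: "e \<cdot> f \<cdot> (e \<cdot> f) = e \<cdot> f" and fe: "f \<cdot> e \<cdot> (f \<cdot> e) = f \<cdot> e"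
    using idem_mult_idem e f by blast+
  have "e \<cdot> f \<cdot> (f \<cdot> e) \<cdot> (e \<cdot> f) = e \<cdot> f" "f \<cdot> e \<cdot> (e \<cdot> f) \<cdot> (f \<cdot> e) = f \<cdot> e"
    using ef fe e f by (metis assoc)+
  then have "istar m (e \<cdot> f) = f \<cdot> e"
    by (rule istar_unique)
  then show ?thesis
    using istar_idem[OF ef] by simp
qed

lemma idems_mult_closed: "e \<in> idems m \<Longrightarrow> f \<in> idems m \<Longrightarrow> e \<cdot> f \<in> idems m"
  by (simp add: idems_iff idem_mult_idem)

lemma idems_mult_self: "e \<in> idems m \<Longrightarrow> e \<cdot> (e \<cdot> y) = e \<cdot> y"
  by (simp add: idems_iff assoc[symmetric])

lemma unit_in_idems: "u \<in> idems m"
  by (simp add: idems_iff)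

lemma istar_mult_in_idems: "istar m s \<cdot> s \<in> idems m"
  and mult_istar_in_idems: "s \<cdot> istar m s \<in> idems m"
  by (simp_all add: idems_iff assoc mult_istar_mult_cancel istar_mult_istar_cancel)

lemma istar_of_idems: "e \<in> idems m \<Longrightarrow> istar m e = e"
  by (simp add: idems_iff istar_idem)

lemma istar_mult: "istar m (s \<cdot> t) = istar m t \<cdot> istar m s"
proof (rule istar_unique)
  have "t \<cdot> istar m t \<cdot> (istar m s \<cdot> s) = istar m s \<cdot> s \<cdot> (t \<cdot> istar m t)"
    using idems_commute[OF mult_istar_in_idems istar_mult_in_idems] .
  then have swap: "t \<cdot> (istar m t \<cdot> (istar m s \<cdot> (s \<cdot> y))) = istar m s \<cdot> (s \<cdot> (t \<cdot> (istar m t \<cdot> y)))" for y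
    by (metis assoc)
  show "s \<cdot> t \<cdot> (istar m t \<cdot> istar m s) \<cdot> (s \<cdot> t) = s \<cdot> t"
    by (simp add: assoc swap mult_istar_mult_cancel) (simp add: assoc[symmetric] mult_istar_mult)
  show "istar m t \<cdot> istar m s \<cdot> (s \<cdot> t) \<cdot> (istar m t \<cdot> istar m s) = istar m t \<cdot> istar m s"
    by (simp add: assoc swap[symmetric] istar_mult_istar_cancel) (simp add: assoc[symmetric] istar_mult_istar)
qed

lemma idems_conj:
  assumes e: "e \<in> idems m"
  shows "istar m t \<cdot> e \<cdot> t \<in> idems m"
proof -
  have "t \<cdot> istar m t \<cdot> e = e \<cdot> (t \<cdot> istar m t)"
    using idems_commute[OF mult_istar_in_idems e] .
  then have swap: "t \<cdot> (istar m t \<cdot> (e \<cdot> y)) = e \<cdot> (t \<cdot> (istar m t \<cdot> y))" for y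
    by (metis assoc)
  have "istar m t \<cdot> e \<cdot> t \<cdot> (istar m t \<cdot> e \<cdot> t) = istar m t \<cdot> (e \<cdot> (t \<cdot> (istar m t \<cdot> (e \<cdot> t))))"
    by (simp add: assoc)
  also have "\<dots> = istar m t \<cdot> (e \<cdot> (t \<cdot> (istar m t \<cdot> t)))"
    by (simp only: swap idems_mult_self[OF e])
  also have "\<dots> = istar m t \<cdot> (e \<cdot> t)"
    by (simp add: assoc[symmetric] mult_istar_mult)
  finally show ?thesis
    by (simp add: idems_iff assoc)
qed

end

section \<open>Characters and germs\<close>

context inverse_semigroup
begin

lemma charsD:
  assumes "\<phi> \<in> chars m z u"
  shows "\<phi> x \<Longrightarrow> x \<in> idems m" "\<not> \<phi> z" "\<phi> u"
    "e \<in> idems m \<Longrightarrow> f \<in> idems m \<Longrightarrow> \<phi> (e \<cdot> f) \<longleftrightarrow> \<phi> e \<and> \<phi> f"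
  using assms unfolding chars_def by auto

lemma Uset_subset_chars: "Uset m z u e \<subseteq> chars m z u"
  by (auto simp: Uset_def)

definition germ_rel :: "('a \<Rightarrow> bool) \<Rightarrow> 'a \<Rightarrow> 'a \<Rightarrow> bool" where
  "germ_rel \<phi> s t \<longleftrightarrow> (\<exists>e\<in>idems m. \<phi> e \<and> s \<cdot> e = t \<cdot> e)"

lemma germ_rel_refl: "\<phi> \<in> chars m z u \<Longrightarrow> germ_rel \<phi> s s"
  unfolding germ_rel_def using charsD(3) unit_in_idems by blast

lemma germ_rel_sym: "germ_rel \<phi> s t \<Longrightarrow> germ_rel \<phi> t s"
  unfolding germ_rel_def by metis

lemma germ_rel_trans:
  assumes \<phi>: "\<phi> \<in> chars m z u" and "germ_rel \<phi> s t" "germ_rel \<phi> t r"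
  shows "germ_rel \<phi> s r"
proof -
  obtain e f where e: "e \<in> idems m" "\<phi> e" "s \<cdot> e = t \<cdot> e"
    and f: "f \<in> idems m" "\<phi> f" "t \<cdot> f = r \<cdot> f"
    using assms(2,3) unfolding germ_rel_def by blast
  have "s \<cdot> (e \<cdot> f) = r \<cdot> (e \<cdot> f)"
    using e(3) f(3) idems_commute[OF e(1) f(1)] by (metis assoc)
  moreover have "\<phi> (e \<cdot> f)"
    using charsD(4)[OF \<phi> e(1) f(1)] e f by simp
  ultimately show ?thesis
    unfolding germ_rel_def using idems_mult_closed[OF e(1) f(1)] by blast
qed

lemma germ_rel_mult:
  assumes \<phi>: "\<phi> \<in> chars m z u"
    and sr: "germ_rel (char_act m t \<phi>) s r" and tq: "germ_rel \<phi> t q"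
  shows "germ_rel \<phi> (s \<cdot> t) (r \<cdot> q)"
proof -
  obtain e where e: "e \<in> idems m" "\<phi> (istar m t \<cdot> e \<cdot> t)" "s \<cdot> e = r \<cdot> e"
    using sr unfolding germ_rel_def char_act_def by blast
  obtain f where f: "f \<in> idems m" "\<phi> f" "t \<cdot> f = q \<cdot> f"
    using tq unfolding germ_rel_def by blast
  \<comment> \<open>the witness is \<open>f (t\<^sup>* e t)\<close>: \<open>e\<close> pulled back along \<open>t\<close>, cut down by \<open>f\<close>\<close>
  define a where "a = istar m t \<cdot> e \<cdot> t"
  have a: "a \<in> idems m"
    unfolding a_def using e(1) by (rule idems_conj)
  have "t \<cdot> istar m t \<cdot> e = e \<cdot> (t \<cdot> istar m t)"
    using idems_commute[OF mult_istar_in_idems e(1)] .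
  then have ta: "t \<cdot> a = e \<cdot> t"
    unfolding a_def by (metis assoc mult_istar_mult)
  have key: "p \<cdot> (f \<cdot> a) = e \<cdot> t \<cdot> f" if "p \<cdot> f = t \<cdot> f" for p
    using that ta idems_commute[OF a f(1)] by (metis assoc)
  have "s \<cdot> t \<cdot> (f \<cdot> a) = r \<cdot> q \<cdot> (f \<cdot> a)"
    using key[of t] key[of q] f(3) e(3) by (metis assoc)
  moreover have "\<phi> (f \<cdot> a)"
    using charsD(4)[OF \<phi> f(1) a] f(2) e(2) a_def by simp
  ultimately show ?thesis
    unfolding germ_rel_def using idems_mult_closed[OF f(1) a] by blast
qed

lemma germ_rel_iff_Uset:
  "\<phi> \<in> chars m z u \<Longrightarrow> germ_rel \<phi> s t \<longleftrightarrow> (\<exists>e\<in>idems m. s \<cdot> e = t \<cdot> e \<and> \<phi> \<in> Uset m z u e)"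
  unfolding germ_rel_def Uset_def by blast

lemma mem_germ_iff:
  "(t, \<psi>) \<in> germ m z u s \<phi> \<longleftrightarrow> \<psi> = \<phi> \<and> \<phi> \<in> Uset m z u (istar m t \<cdot> t) \<and> germ_rel \<phi> s t"
  unfolding germ_def germ_rel_def by auto

lemma germ_cong:
  assumes "\<phi> \<in> chars m z u" "germ_rel \<phi> s t"
  shows "germ m z u s \<phi> = germ m z u t \<phi>"
proof -
  have "germ_rel \<phi> s r \<longleftrightarrow> germ_rel \<phi> t r" for r
    using germ_rel_trans[OF assms(1)] germ_rel_sym assms(2) by blast
  then show ?thesis
    by (auto simp: mem_germ_iff)
qed

lemma self_in_germ: "\<phi> \<in> Uset m z u (istar m s \<cdot> s) \<Longrightarrow> (s, \<phi>) \<in> germ m z u s \<phi>"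
  using Uset_subset_chars by (auto simp: mem_germ_iff intro: germ_rel_refl)

lemma germ_eq_iff:
  assumes "\<phi> \<in> Uset m z u (istar m s \<cdot> s)"
  shows "germ m z u s \<phi> = germ m z u t \<psi> \<longleftrightarrow> \<psi> = \<phi> \<and> germ_rel \<phi> s t"
proof
  assume "germ m z u s \<phi> = germ m z u t \<psi>"
  then have "(s, \<phi>) \<in> germ m z u t \<psi>"
    using self_in_germ[OF assms] by simp
  then show "\<psi> = \<phi> \<and> germ_rel \<phi> s t"
    by (auto simp: mem_germ_iff germ_rel_sym)
next
  assume "\<psi> = \<phi> \<and> germ_rel \<phi> s t"
  then show "germ m z u s \<phi> = germ m z u t \<psi>"
    using germ_cong Uset_subset_chars assms by blast
qed

lemma germ_in_arrows: "\<phi> \<in> Uset m z u (istar m s \<cdot> s) \<Longrightarrow> germ m z u s \<phi> \<in> arrows m z u"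
  unfolding arrows_def by blast

lemma rep_germ:
  assumes "\<phi> \<in> Uset m z u (istar m s \<cdot> s)"
  shows "snd (rep (germ m z u s \<phi>)) = \<phi>" "germ_rel \<phi> s (fst (rep (germ m z u s \<phi>)))"
    "\<phi> \<in> Uset m z u (istar m (fst (rep (germ m z u s \<phi>))) \<cdot> fst (rep (germ m z u s \<phi>)))"
proof -
  have "rep (germ m z u s \<phi>) \<in> germ m z u s \<phi>"
    unfolding rep_def using self_in_germ[OF assms] by (rule someI)
  then have "(fst (rep (germ m z u s \<phi>)), snd (rep (germ m z u s \<phi>))) \<in> germ m z u s \<phi>"
    by simp
  then show "snd (rep (germ m z u s \<phi>)) = \<phi>" "germ_rel \<phi> s (fst (rep (germ m z u s \<phi>)))"
    "\<phi> \<in> Uset m z u (istar m (fst (rep (germ m z u s \<phi>))) \<cdot> fst (rep (germ m z u s \<phi>)))"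
    unfolding mem_germ_iff by auto
qed

lemma gsrc_germ: "\<phi> \<in> Uset m z u (istar m s \<cdot> s) \<Longrightarrow> gsrc (germ m z u s \<phi>) = \<phi>"
  using rep_germ(1) by (simp add: gsrc_def)

lemma arrows_eq_germ_rep:
  assumes "g \<in> arrows m z u"
  shows "g = germ m z u (fst (rep g)) (gsrc g)"
    and "gsrc g \<in> Uset m z u (istar m (fst (rep g)) \<cdot> fst (rep g))"
proof -
  obtain s \<phi> where g: "g = germ m z u s \<phi>" and \<phi>: "\<phi> \<in> Uset m z u (istar m s \<cdot> s)"
    using assms unfolding arrows_def by blast
  have "germ m z u s \<phi> = germ m z u (fst (rep g)) \<phi>"
    using g rep_germ(2)[OF \<phi>] germ_cong[of \<phi>] \<phi> Uset_subset_chars by blast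
  then show "g = germ m z u (fst (rep g)) (gsrc g)"
    using g rep_germ(1)[OF \<phi>] by (simp add: gsrc_def)
  show "gsrc g \<in> Uset m z u (istar m (fst (rep g)) \<cdot> fst (rep g))"
    using g rep_germ[OF \<phi>] by (simp add: gsrc_def)
qed

lemma char_act_cong:
  assumes \<phi>: "\<phi> \<in> chars m z u" and "germ_rel \<phi> s r"
  shows "char_act m s \<phi> = char_act m r \<phi>"
proof -
  obtain f where f: "f \<in> idems m" "\<phi> f" "s \<cdot> f = r \<cdot> f"
    using assms(2) unfolding germ_rel_def by blast
  \<comment> \<open>\<open>(sf)\<^sup>* e (sf) = f (s\<^sup>* e s) f\<close>, and \<open>\<phi>\<close> does not see the factor \<open>f\<close>\<close>
  have restrict: "\<phi> (istar m s \<cdot> e \<cdot> s) = \<phi> (istar m (s \<cdot> f) \<cdot> e \<cdot> (s \<cdot> f))"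
    if e: "e \<in> idems m" for e s
  proof -
    define a where "a = istar m s \<cdot> e \<cdot> s"
    have a: "a \<in> idems m"
      unfolding a_def using e by (rule idems_conj)
    have "istar m (s \<cdot> f) \<cdot> e \<cdot> (s \<cdot> f) = f \<cdot> (a \<cdot> f)"
      unfolding a_def istar_mult istar_of_idems[OF f(1)] by (simp add: assoc)
    also have "\<dots> = a \<cdot> f"
      using idems_commute[OF a f(1)] idems_mult_self[OF f(1)] by simp
    finally show ?thesis
      using charsD(4)[OF \<phi> a f(1)] f(2) a_def by simp
  qed
  show ?thesis
    unfolding char_act_def using restrict[of _ s] restrict[of _ r] f(3) by auto
qed

lemma grng_germ:
  "\<phi> \<in> Uset m z u (istar m s \<cdot> s) \<Longrightarrow> grng m (germ m z u s \<phi>) = char_act m s \<phi>"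
  unfolding grng_def using rep_germ char_act_cong Uset_subset_chars by (metis subsetD)

lemma gmult_germ:
  assumes "\<phi> \<in> Uset m z u (istar m t \<cdot> t)" "char_act m t \<phi> \<in> Uset m z u (istar m s \<cdot> s)"
  shows "gmult m z u (germ m z u s (char_act m t \<phi>)) (germ m z u t \<phi>) = germ m z u (s \<cdot> t) \<phi>"
proof -
  have "germ_rel \<phi> (s \<cdot> t) (fst (rep (germ m z u s (char_act m t \<phi>))) \<cdot> fst (rep (germ m z u t \<phi>)))"
    using assms Uset_subset_chars by (blast intro: germ_rel_mult rep_germ(2))
  then show ?thesis
    unfolding gmult_def rep_germ(1)[OF assms(1)]
    using germ_cong assms(1) Uset_subset_chars by (metis germ_rel_sym subsetD)
qed

end

context inverse_semigroup
begin

lemma topspace_Ehat_top: "topspace (Ehat_top m z u) = chars m z u"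
proof -
  have "Uset m z u u = chars m z u"
    using charsD(3) by (auto simp: Uset_def)
  then show ?thesis
    unfolding Ehat_top_def using unit_in_idems by (auto simp: Uset_def)
qed

lemma openin_Uset: "e \<in> idems m \<Longrightarrow> openin (Ehat_top m z u) (Uset m z u e)"
  unfolding Ehat_top_def by (rule topology_generated_by_Basis) blast

lemma openin_arrows_top_germs:
  assumes "U \<subseteq> Uset m z u (istar m s \<cdot> s)" "openin (Ehat_top m z u) U"
  shows "openin (arrows_top m z u) (germ m z u s ` U)"
  unfolding arrows_top_def by (rule topology_generated_by_Basis) (use assms in blast)

lemma topspace_arrows_top: "topspace (arrows_top m z u) = arrows m z u"
proof
  show "topspace (arrows_top m z u) \<subseteq> arrows m z u"
    unfolding arrows_top_def topology_generated_by_topspace arrows_def by blast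
  show "arrows m z u \<subseteq> topspace (arrows_top m z u)"
  proof
    fix g assume "g \<in> arrows m z u"
    then obtain s \<phi> where "g = germ m z u s \<phi>" "\<phi> \<in> Uset m z u (istar m s \<cdot> s)"
      unfolding arrows_def by blast
    moreover have "openin (arrows_top m z u) (germ m z u s ` Uset m z u (istar m s \<cdot> s))"
      using openin_arrows_top_germs openin_Uset istar_mult_in_idems by blast
    ultimately show "g \<in> topspace (arrows_top m z u)"
      using openin_subset by blast
  qed
qed

end

section \<open>From S-actions to \<open>\<G>(S)\<close>-actions\<close>

locale S_space = inverse_semigroup +
  fixes X :: "'x topology" and D :: "'a \<Rightarrow> 'x set" and A :: "'a \<Rightarrow> 'x \<Rightarrow> 'x"
  assumes S_action: "S_action m z u X D A"
begin

lemma openin_D: "openin X (D s)"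
  and openin_A_image: "openin X (A s ` D s)"
  and homeomorphic_map_A: "homeomorphic_map (subtopology X (D s)) (subtopology X (A s ` D s)) (A s)"
  and D_mult: "D (s \<cdot> t) = {x \<in> D t. A t x \<in> D s}"
  and A_mult: "x \<in> D (s \<cdot> t) \<Longrightarrow> A (s \<cdot> t) x = A s (A t x)"
  and D_zero: "D z = {}"
  and D_unit: "D u = topspace X"
  and A_unit: "x \<in> topspace X \<Longrightarrow> A u x = x"
  using S_action unfolding S_action_def by blast+

lemma D_subset: "D s \<subseteq> topspace X"
  using openin_D openin_subset by blast

lemma A_in_topspace: "x \<in> D s \<Longrightarrow> A s x \<in> topspace X"
  using openin_A_image[of s] openin_subset by blast

lemma inj_on_A: "inj_on (A s) (D s)"
  using homeomorphic_imp_injective_map[OF homeomorphic_map_A[of s]] D_subset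
  by (simp add: Int_absorb1)

lemma A_idem:
  assumes e: "e \<in> idems m" and x: "x \<in> D e"
  shows "A e x = x"
proof -
  have "x \<in> D (e \<cdot> e)"
    using e x by (simp add: idems_iff)
  then have "A e x \<in> D e" "A e (A e x) = A e x"
    using D_mult[of e e] A_mult[of x e e] e by (auto simp: idems_iff)
  then show ?thesis
    using inj_on_A[of e] x by (auto dest: inj_onD)
qed

lemma D_mult_idem: "f \<in> idems m \<Longrightarrow> D (s \<cdot> f) = D s \<inter> D f"
  using D_mult[of s f] A_idem by auto

lemma D_istar_mult: "D (istar m s \<cdot> s) = D s"
proof
  show "D (istar m s \<cdot> s) \<subseteq> D s"
    using D_mult by auto
  have "D s = D (s \<cdot> (istar m s \<cdot> s))"
    using mult_istar_mult by (simp add: assoc)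
  also have "\<dots> \<subseteq> D (istar m s \<cdot> s)"
    using D_mult by blast
  finally show "D s \<subseteq> D (istar m s \<cdot> s)" .
qed

abbreviation anchor :: "'x \<Rightarrow> 'a \<Rightarrow> bool" where
  "anchor \<equiv> toG_anchor m D"

lemma anchor_in_chars: "x \<in> topspace X \<Longrightarrow> anchor x \<in> chars m z u"
  using D_zero D_unit unit_in_idems D_mult_idem idems_mult_closed
  unfolding chars_def toG_anchor_def by auto

lemma anchor_in_Uset_iff: "anchor x \<in> Uset m z u (istar m s \<cdot> s) \<longleftrightarrow> x \<in> D s"
  using anchor_in_chars[of x] D_subset[of s] D_istar_mult[of s] istar_mult_in_idems[of s]
  by (auto simp: Uset_def toG_anchor_def)

lemma A_germ_rel:
  assumes "germ_rel (anchor x) s t" "x \<in> D s"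
  shows "A t x = A s x"
proof -
  obtain e where e: "e \<in> idems m" "x \<in> D e" "s \<cdot> e = t \<cdot> e"
    using assms(1) unfolding germ_rel_def toG_anchor_def by blast
  have "x \<in> D (s \<cdot> e)" "x \<in> D (t \<cdot> e)"
    using D_mult[of s e] D_mult[of t e] A_idem[OF e(1,2)] assms(2) e by auto
  then show ?thesis
    using A_mult[of x s e] A_mult[of x t e] A_idem[OF e(1,2)] e(3) by simp
qed

lemma toG_act_germ: "x \<in> D s \<Longrightarrow> toG_act A (germ m z u s (anchor x)) x = A s x"
  unfolding toG_act_def
  using rep_germ(2) anchor_in_Uset_iff A_germ_rel by blast

lemma anchor_A: "x \<in> D t \<Longrightarrow> anchor (A t x) = char_act m t (anchor x)"
proof
  fix e
  assume x: "x \<in> D t"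
  show "anchor (A t x) e = char_act m t (anchor x) e"
  proof (cases "e \<in> idems m")
    case True
    have "A t x \<in> D (istar m t)"
      using x D_istar_mult[of t] D_mult[of "istar m t" t] by auto
    then have "x \<in> D (istar m t \<cdot> e \<cdot> t) \<longleftrightarrow> A t x \<in> D e"
      using x D_mult[of "istar m t \<cdot> e" t] D_mult[of "istar m t" e] A_idem[OF True] by auto
    then show ?thesis
      using True idems_conj[OF True] by (simp add: toG_anchor_def char_act_def)
  qed (simp add: toG_anchor_def char_act_def)
qed

lemma continuous_map_anchor: "continuous_map X (Ehat_top m z u) anchor"
  unfolding Ehat_top_def
proof (rule continuous_on_generated_topo)
  fix U
  assume "U \<in> {Uset m z u e |e. e \<in> idems m}"
  then obtain e where e: "U = Uset m z u e" "e \<in> idems m"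
    by blast
  then have "anchor -` U \<inter> topspace X = D e"
    using D_subset anchor_in_chars by (auto simp: Uset_def toG_anchor_def)
  then show "openin X (anchor -` U \<inter> topspace X)"
    using openin_D by simp
next
  show "anchor ` topspace X \<subseteq> \<Union> {Uset m z u e |e. e \<in> idems m}"
    using anchor_in_chars unit_in_idems charsD(3) by (auto simp: Uset_def)
qed

lemma openin_A_preimage: "openin X V \<Longrightarrow> openin X {x \<in> D s. A s x \<in> V}"
  using openin_continuous_map_preimage[of "subtopology X (D s)" X "A s" V]
    homeomorphic_imp_continuous_map[OF homeomorphic_map_A[of s]] continuous_map_into_fulltopology
    openin_open_subtopology[OF openin_D[of s]] D_subset
  by (force simp: Int_absorb1)

lemma continuous_map_toG_act:
  "continuous_map
     (subtopology (prod_topology (arrows_top m z u) X)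
        {(g, x). g \<in> arrows m z u \<and> x \<in> topspace X \<and> gsrc g = anchor x})
     X (\<lambda>(g, x). toG_act A g x)"
  (is "continuous_map (subtopology ?P ?W) X ?act")
proof -
  \<comment> \<open>on \<open>germ s ` U\<^bsub>s\<^sup>*s\<^esub> \<times> X\<close> the action is \<open>A s\<close>, and these sets cover the domain\<close>
  have on_germs: "x \<in> D s \<and> toG_act A g x = A s x"
    if "(g, x) \<in> ?W" "g \<in> germ m z u s ` Uset m z u (istar m s \<cdot> s)" for g x s
    using that gsrc_germ anchor_in_Uset_iff toG_act_germ by auto
  have covered: "g \<in> germ m z u (fst (rep g)) ` Uset m z u (istar m (fst (rep g)) \<cdot> fst (rep g))"
    if "(g, x) \<in> ?W" for g x
    using arrows_eq_germ_rep[of g] that by auto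
  have topspace_W: "topspace (subtopology ?P ?W) = ?W"
    by (auto simp: topspace_arrows_top)
  show ?thesis
    unfolding continuous_map_def topspace_W
  proof (intro conjI allI impI)
    show "?act \<in> ?W \<rightarrow> topspace X"
      using on_germs covered A_in_topspace by fastforce
    fix V
    assume V: "openin X V"
    have "{p \<in> ?W. ?act p \<in> V} =
        ?W \<inter> (\<Union>s. germ m z u s ` Uset m z u (istar m s \<cdot> s) \<times> {x \<in> D s. A s x \<in> V})"
      using on_germs covered by fastforce
    moreover have "openin ?P (\<Union>s. germ m z u s ` Uset m z u (istar m s \<cdot> s) \<times> {x \<in> D s. A s x \<in> V})"
      using openin_arrows_top_germs openin_Uset istar_mult_in_idems openin_A_preimage[OF V]
      by (intro openin_Union) (auto simp: openin_prod_Times_iff)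
    ultimately show "openin (subtopology ?P ?W) {p \<in> ?W. ?act p \<in> V}"
      by (simp add: openin_subtopology_Int2)
  qed
qed

lemma G_action_toG: "G_action m z u X anchor (toG_act A)"
  unfolding G_action_def
proof (intro conjI allI impI ballI continuous_map_anchor continuous_map_toG_act)
  fix g x
  assume "g \<in> arrows m z u \<and> x \<in> topspace X \<and> gsrc g = anchor x"
  then have "g = germ m z u (fst (rep g)) (anchor x)" "x \<in> D (fst (rep g))"
    using arrows_eq_germ_rep[of g] anchor_in_Uset_iff by auto
  then show "anchor (toG_act A g x) = grng m g"
    using anchor_A grng_germ anchor_in_Uset_iff by (metis toG_act_def)
next
  fix g h x
  assume "g \<in> arrows m z u \<and> h \<in> arrows m z u \<and> x \<in> topspace X \<and>
    gsrc h = anchor x \<and> gsrc g = grng m h"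
  then obtain s t where h: "h = germ m z u t (anchor x)" "x \<in> D t"
    and g: "g = germ m z u s (char_act m t (anchor x))" "A t x \<in> D s"
    using arrows_eq_germ_rep anchor_in_Uset_iff grng_germ anchor_A by metis
  then have "gmult m z u g h = germ m z u (s \<cdot> t) (anchor x)"
    using gmult_germ anchor_in_Uset_iff anchor_A by metis
  moreover have "x \<in> D (s \<cdot> t)"
    using D_mult g h by simp
  ultimately show "toG_act A g (toG_act A h x) = toG_act A (gmult m z u g h) x"
    using g h toG_act_germ A_mult anchor_A by metis
next
  fix x
  assume "x \<in> topspace X"
  then show "toG_act A (gunit m z u (anchor x)) x = x"
    using toG_act_germ[of x u] D_unit A_unit by (simp add: gunit_def)
qed

lemma S_action_eq_toS_toG: "S_action_eq (toS_dom m X anchor) (toS_act m z u anchor (toG_act A)) D A"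
proof -
  have "toS_dom m X anchor s = D s" for s
    using anchor_in_Uset_iff[of _ s] anchor_in_chars D_subset
    by (auto simp: toS_dom_def Uset_def)
  then show ?thesis
    unfolding S_action_eq_def toS_act_def using toG_act_germ by simp
qed

end

section \<open>From \<open>\<G>(S)\<close>-actions to S-actions\<close>

locale G_space = inverse_semigroup +
  fixes X :: "'x topology" and \<rho> :: "'x \<Rightarrow> 'a \<Rightarrow> bool"
    and act :: "('a \<times> ('a \<Rightarrow> bool)) set \<Rightarrow> 'x \<Rightarrow> 'x"
  assumes G_action: "G_action m z u X \<rho> act"
begin

lemma continuous_map_anchor: "continuous_map X (Ehat_top m z u) \<rho>"
  and continuous_map_act: "continuous_map
       (subtopology (prod_topology (arrows_top m z u) X)
          {(g, x). g \<in> arrows m z u \<and> x \<in> topspace X \<and> gsrc g = \<rho> x})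
       X (\<lambda>(g, x). act g x)"
  and anchor_act: "g \<in> arrows m z u \<Longrightarrow> x \<in> topspace X \<Longrightarrow> gsrc g = \<rho> x \<Longrightarrow>
     \<rho> (act g x) = grng m g"
  and act_gmult: "g \<in> arrows m z u \<Longrightarrow> h \<in> arrows m z u \<Longrightarrow> x \<in> topspace X \<Longrightarrow>
     gsrc h = \<rho> x \<Longrightarrow> gsrc g = grng m h \<Longrightarrow> act g (act h x) = act (gmult m z u g h) x"
  and act_gunit: "x \<in> topspace X \<Longrightarrow> act (gunit m z u (\<rho> x)) x = x"
  using G_action unfolding G_action_def by blast+

lemma anchor_in_chars: "x \<in> topspace X \<Longrightarrow> \<rho> x \<in> chars m z u"
  using continuous_map_anchor topspace_Ehat_top unfolding continuous_map_def by blast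

lemma act_in_topspace:
  assumes "g \<in> arrows m z u" "x \<in> topspace X" "gsrc g = \<rho> x"
  shows "act g x \<in> topspace X"
  using continuous_map_image_subset_topspace[OF continuous_map_act] assms
  by (force simp: topspace_arrows_top)

abbreviation Ds :: "'a \<Rightarrow> 'x set" where
  "Ds \<equiv> toS_dom m X \<rho>"

abbreviation As :: "'a \<Rightarrow> 'x \<Rightarrow> 'x" where
  "As \<equiv> toS_act m z u \<rho> act"

lemma Ds_subset: "Ds s \<subseteq> topspace X"
  by (auto simp: toS_dom_def)

lemma Ds_iff: "x \<in> Ds s \<longleftrightarrow> x \<in> topspace X \<and> \<rho> x \<in> Uset m z u (istar m s \<cdot> s)"
  using anchor_in_chars by (auto simp: toS_dom_def Uset_def)

lemma Ds_idem: "e \<in> idems m \<Longrightarrow> Ds e = {x \<in> topspace X. \<rho> x e}"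
  by (simp add: toS_dom_def istar_of_idems idems_iff)

lemma Ds_istar_mult: "Ds (istar m s \<cdot> s) = Ds s"
  using Ds_idem[OF istar_mult_in_idems] by (simp add: toS_dom_def)

lemma openin_Ds: "openin X (Ds s)"
proof -
  have "Ds s = {x \<in> topspace X. \<rho> x \<in> Uset m z u (istar m s \<cdot> s)}"
    using Ds_iff by blast
  then show ?thesis
    using openin_continuous_map_preimage[OF continuous_map_anchor openin_Uset[OF istar_mult_in_idems]]
    by simp
qed

lemma germ_anchor_in_arrows: "x \<in> Ds s \<Longrightarrow> germ m z u s (\<rho> x) \<in> arrows m z u"
  and gsrc_germ_anchor: "x \<in> Ds s \<Longrightarrow> gsrc (germ m z u s (\<rho> x)) = \<rho> x"
  using germ_in_arrows gsrc_germ Ds_iff by blast+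

lemma As_in_topspace: "x \<in> Ds s \<Longrightarrow> As s x \<in> topspace X"
  unfolding toS_act_def using germ_anchor_in_arrows gsrc_germ_anchor act_in_topspace Ds_subset by blast

lemma anchor_As: "x \<in> Ds s \<Longrightarrow> \<rho> (As s x) = char_act m s (\<rho> x)"
  unfolding toS_act_def
  using anchor_act germ_anchor_in_arrows gsrc_germ_anchor grng_germ Ds_iff by metis

lemma Ds_mult: "Ds (s \<cdot> t) = {x \<in> Ds t. As t x \<in> Ds s}"
proof -
  define a where "a = istar m t \<cdot> (istar m s \<cdot> s) \<cdot> t"
  have a: "a \<in> idems m"
    unfolding a_def by (rule idems_conj[OF istar_mult_in_idems])
  have a_absorb: "a \<cdot> (istar m t \<cdot> t) = a"
    unfolding a_def using mult_istar_mult[of t] by (simp add: assoc)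
  have st: "istar m (s \<cdot> t) \<cdot> (s \<cdot> t) = a"
    unfolding a_def istar_mult by (simp add: assoc)
  have "\<rho> x a \<longleftrightarrow> \<rho> x (istar m t \<cdot> t) \<and> \<rho> x a" if "x \<in> topspace X" for x
    using charsD(4)[OF anchor_in_chars[OF that] a istar_mult_in_idems[of t]] a_absorb by auto
  moreover have "\<rho> x a \<longleftrightarrow> \<rho> (As t x) (istar m s \<cdot> s)" if "x \<in> Ds t" for x
    using anchor_As[OF that] istar_mult_in_idems by (simp add: char_act_def a_def)
  ultimately show ?thesis
    using As_in_topspace by (auto simp: toS_dom_def st)
qed

lemma As_mult:
  assumes x: "x \<in> Ds (s \<cdot> t)"
  shows "As (s \<cdot> t) x = As s (As t x)"
proof -
  have xt: "x \<in> Ds t" and yt: "As t x \<in> Ds s"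
    using x Ds_mult by auto
  have "As s (As t x) = act (germ m z u s (char_act m t (\<rho> x))) (act (germ m z u t (\<rho> x)) x)"
    unfolding toS_act_def[of _ _ _ _ _ s] using anchor_As[OF xt] by (simp add: toS_act_def)
  also have "\<dots> = act (germ m z u (s \<cdot> t) (\<rho> x)) x"
    using act_gmult gmult_germ germ_anchor_in_arrows gsrc_germ_anchor grng_germ Ds_iff
      anchor_As xt yt by metis
  finally show ?thesis
    by (simp add: toS_act_def)
qed

lemma As_idem:
  assumes e: "e \<in> idems m" and x: "x \<in> Ds e"
  shows "As e x = x"
proof -
  have "germ_rel (\<rho> x) e u"
    using e x Ds_idem unfolding germ_rel_def by (auto simp: idems_iff)
  then have "germ m z u e (\<rho> x) = gunit m z u (\<rho> x)"
    unfolding gunit_def using germ_cong anchor_in_chars x Ds_subset by blast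
  then show ?thesis
    unfolding toS_act_def using act_gunit x Ds_subset by auto
qed

lemma As_image: "As s ` Ds s = Ds (istar m s)"
proof
  show "As s ` Ds s \<subseteq> Ds (istar m s)"
    using Ds_istar_mult[of s] Ds_mult[of "istar m s" s] by auto
  show "Ds (istar m s) \<subseteq> As s ` Ds s"
  proof
    fix y
    assume "y \<in> Ds (istar m s)"
    then have y: "y \<in> Ds (s \<cdot> istar m s)"
      using Ds_istar_mult[of "istar m s"] by simp
    then have "As (istar m s) y \<in> Ds s" "As s (As (istar m s) y) = y"
      using Ds_mult As_mult[OF y] As_idem[OF mult_istar_in_idems y] by auto
    then show "y \<in> As s ` Ds s"
      by force
  qed
qed

lemma istar_As_As: "x \<in> Ds s \<Longrightarrow> As (istar m s) (As s x) = x"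
  using As_mult[of x "istar m s" s] As_idem[OF istar_mult_in_idems] Ds_istar_mult by auto

lemma continuous_map_germ_anchor:
  "continuous_map (subtopology X (Ds s)) (arrows_top m z u) (\<lambda>x. germ m z u s (\<rho> x))"
  unfolding arrows_top_def
proof (rule continuous_on_generated_topo)
  show "(\<lambda>x. germ m z u s (\<rho> x)) ` topspace (subtopology X (Ds s)) \<subseteq>
      \<Union> {{germ m z u s \<phi> |\<phi>. \<phi> \<in> U} |s U.
         U \<subseteq> Uset m z u (istar m s \<cdot> s) \<and> openin (Ehat_top m z u) U}"
    using topspace_arrows_top[unfolded arrows_top_def topology_generated_by_topspace]
      germ_anchor_in_arrows Ds_subset
    by auto
  fix B
  assume "B \<in> {{germ m z u s \<phi> |\<phi>. \<phi> \<in> U} |s U.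
      U \<subseteq> Uset m z u (istar m s \<cdot> s) \<and> openin (Ehat_top m z u) U}"
  then obtain t V where B: "B = {germ m z u t \<phi> |\<phi>. \<phi> \<in> V}"
    and V: "openin (Ehat_top m z u) V"
    by blast
  define P where "P = {x \<in> topspace X. \<rho> x \<in> V} \<inter>
    (\<Union>e\<in>{e \<in> idems m. s \<cdot> e = t \<cdot> e}. {x \<in> topspace X. \<rho> x \<in> Uset m z u e})"
  have "(\<lambda>x. germ m z u s (\<rho> x)) -` B \<inter> topspace (subtopology X (Ds s)) = Ds s \<inter> P"
  proof (rule set_eqI)
    fix x
    show "x \<in> (\<lambda>x. germ m z u s (\<rho> x)) -` B \<inter> topspace (subtopology X (Ds s)) \<longleftrightarrow> x \<in> Ds s \<inter> P"
    proof (cases "x \<in> Ds s")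
      case True
      then show ?thesis
        using Ds_subset germ_eq_iff[of "\<rho> x" s t] Ds_iff germ_rel_iff_Uset anchor_in_chars
        unfolding B P_def by auto
    qed (use Ds_subset in auto)
  qed
  moreover have "openin X P"
    unfolding P_def
    by (intro openin_Int openin_Union;
        auto intro!: openin_continuous_map_preimage[OF continuous_map_anchor] openin_Uset V)
  ultimately show "openin (subtopology X (Ds s))
      ((\<lambda>x. germ m z u s (\<rho> x)) -` B \<inter> topspace (subtopology X (Ds s)))"
    by (simp add: openin_subtopology_Int2)
qed

lemma continuous_map_As: "continuous_map (subtopology X (Ds s)) (subtopology X (Ds (istar m s))) (As s)"
proof -
  have "continuous_map (subtopology X (Ds s)) (prod_topology (arrows_top m z u) X)
      (\<lambda>x. (germ m z u s (\<rho> x), x))"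
    using continuous_map_germ_anchor
    by (simp add: continuous_map_pairwise o_def continuous_map_from_subtopology)
  then have "continuous_map (subtopology X (Ds s))
      (subtopology (prod_topology (arrows_top m z u) X)
         {(g, x). g \<in> arrows m z u \<and> x \<in> topspace X \<and> gsrc g = \<rho> x})
      (\<lambda>x. (germ m z u s (\<rho> x), x))"
    using germ_anchor_in_arrows gsrc_germ_anchor Ds_subset
    by (auto simp: continuous_map_in_subtopology)
  from continuous_map_compose[OF this continuous_map_act]
  have "continuous_map (subtopology X (Ds s)) X (As s)"
    by (simp add: o_def toS_act_def[abs_def])
  then show ?thesis
    using As_image by (auto simp: continuous_map_in_subtopology)
qed

lemma S_action_toS: "S_action m z u X Ds As"
proof -
  have "homeomorphic_map (subtopology X (Ds s)) (subtopology X (As s ` Ds s)) (As s)" for s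
    unfolding homeomorphic_map_maps homeomorphic_maps_def As_image
    using continuous_map_As[of s] continuous_map_As[of "istar m s"] istar_As_As[of _ s]
      istar_As_As[of _ "istar m s"] Ds_subset
    by (intro exI[of _ "As (istar m s)"]) auto
  moreover have "Ds z = {}"
    using anchor_in_chars charsD(2) by (auto simp: toS_dom_def)
  moreover have "Ds u = topspace X"
    using anchor_in_chars charsD(3) by (auto simp: toS_dom_def istar_idem)
  ultimately show ?thesis
    unfolding S_action_def
    using As_image openin_Ds Ds_mult As_mult As_idem[OF unit_in_idems] by auto
qed

lemma G_action_eq_toG_toS: "G_action_eq m z u X (toG_anchor m Ds) (toG_act As) \<rho> act"
proof -
  have "toG_anchor m Ds x = \<rho> x" if x: "x \<in> topspace X" for x
    using Ds_idem x charsD(1)[OF anchor_in_chars[OF x]] by (auto simp: toG_anchor_def)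
  then show ?thesis
    unfolding G_action_eq_def toG_act_def toS_act_def
    using arrows_eq_germ_rep(1) by (metis (no_types, lifting))
qed

end

lemma S_space_iff: "S_space m z u X D A \<longleftrightarrow> inverse_semigroup01 m z u \<and> S_action m z u X D A"
  by (simp add: S_space_def S_space_axioms_def inverse_semigroup_def)

lemma G_space_iff: "G_space m z u X \<rho> act \<longleftrightarrow> inverse_semigroup01 m z u \<and> G_action m z u X \<rho> act"
  by (simp add: G_space_def G_space_axioms_def inverse_semigroup_def)

section \<open>Equivariant maps\<close>

lemma S_equivariant_iff_G_equivariant:
  assumes "S_space m z u X D A" "S_space m z u Y D' A'"
  shows "S_equivariant D A D' A' X f \<longleftrightarrow>
    G_equivariant m z u X (toG_anchor m D) (toG_act A) (toG_anchor m D') (toG_act A') f"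
proof -
  interpret S1: S_space m z u X D A by fact
  interpret S2: S_space m z u Y D' A' by fact
  have same_anchor: "toG_anchor m D' (f x) = toG_anchor m D x \<longleftrightarrow> (\<forall>s. x \<in> D s \<longleftrightarrow> f x \<in> D' s)" for x
    using S1.D_istar_mult S2.D_istar_mult S1.istar_mult_in_idems
    unfolding toG_anchor_def fun_eq_iff by metis
  have same_action: "(\<forall>s. x \<in> D s \<longrightarrow> f (A s x) = A' s (f x)) \<longleftrightarrow>
      (\<forall>g\<in>arrows m z u. gsrc g = toG_anchor m D x \<longrightarrow> f (toG_act A g x) = toG_act A' g (f x))"
    if anchor: "toG_anchor m D' (f x) = toG_anchor m D x" for x
  proof -
    have "toG_act A (germ m z u s (toG_anchor m D x)) x = A s x"
      and "toG_act A' (germ m z u s (toG_anchor m D x)) (f x) = A' s (f x)" if "x \<in> D s" for s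
      using that S1.toG_act_germ S2.toG_act_germ[of "f x" s] anchor same_anchor by auto
    moreover have "\<exists>s. g = germ m z u s (toG_anchor m D x) \<and> x \<in> D s"
      if "g \<in> arrows m z u" "gsrc g = toG_anchor m D x" for g
      using that S1.arrows_eq_germ_rep S1.anchor_in_Uset_iff by metis
    ultimately show ?thesis
      using S1.germ_in_arrows S1.gsrc_germ S1.anchor_in_Uset_iff by metis
  qed
  show ?thesis
    unfolding S_equivariant_def G_equivariant_def
    using same_anchor same_action by blast
qed

lemma G_equivariant_iff_S_equivariant:
  assumes "G_space m z u X \<rho> act" "G_space m z u Y \<rho>' act'" and f: "f \<in> topspace X \<rightarrow> topspace Y"
  shows "G_equivariant m z u X \<rho> act \<rho>' act' f \<longleftrightarrow>
    S_equivariant (toS_dom m X \<rho>) (toS_act m z u \<rho> act) (toS_dom m Y \<rho>') (toS_act m z u \<rho>' act') X f"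
proof -
  interpret G1: G_space m z u X \<rho> act by fact
  interpret G2: G_space m z u Y \<rho>' act' by fact
  have same_anchor: "\<rho>' (f x) = \<rho> x \<longleftrightarrow> (\<forall>s. x \<in> G1.Ds s \<longleftrightarrow> f x \<in> G2.Ds s)"
    if x: "x \<in> topspace X" for x
  proof -
    have fx: "f x \<in> topspace Y"
      using f x by blast
    have "\<rho>' (f x) = \<rho> x \<longleftrightarrow> (\<forall>e\<in>idems m. \<rho>' (f x) e \<longleftrightarrow> \<rho> x e)"
      using G1.charsD(1)[OF G1.anchor_in_chars[OF x]] G1.charsD(1)[OF G2.anchor_in_chars[OF fx]]
      unfolding fun_eq_iff by blast
    also have "\<dots> \<longleftrightarrow> (\<forall>s. \<rho>' (f x) (m (istar m s) s) \<longleftrightarrow> \<rho> x (m (istar m s) s))"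
      using G1.istar_mult_in_idems G1.istar_of_idems G1.idems_iff by metis
    also have "\<dots> \<longleftrightarrow> (\<forall>s. x \<in> G1.Ds s \<longleftrightarrow> f x \<in> G2.Ds s)"
      using x fx by (auto simp: toS_dom_def)
    finally show ?thesis .
  qed
  have same_action: "(\<forall>s. x \<in> G1.Ds s \<longrightarrow> f (G1.As s x) = G2.As s (f x)) \<longleftrightarrow>
      (\<forall>g\<in>arrows m z u. gsrc g = \<rho> x \<longrightarrow> f (act g x) = act' g (f x))"
    if x: "x \<in> topspace X" and anchor: "\<rho>' (f x) = \<rho> x" for x
  proof -
    have "\<exists>s. g = germ m z u s (\<rho> x) \<and> x \<in> G1.Ds s"
      if "g \<in> arrows m z u" "gsrc g = \<rho> x" for g
      using that x G1.arrows_eq_germ_rep G1.Ds_iff by metis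
    then show ?thesis
      unfolding toS_act_def anchor
      using G1.germ_anchor_in_arrows G1.gsrc_germ_anchor by metis
  qed
  show ?thesis
    unfolding S_equivariant_def G_equivariant_def
    using same_anchor same_action by blast
qed

theorem theorem3p7:
  fixes m :: "'a \<Rightarrow> 'a \<Rightarrow> 'a" and z u :: 'a
  assumes "inverse_semigroup01 m z u"
  shows
    "(\<forall>(X :: 'x topology) D A. S_action m z u X D A \<longrightarrow>
        G_action m z u X (toG_anchor m D) (toG_act A))
   \<and> (\<forall>(X :: 'x topology) \<rho> act. G_action m z u X \<rho> act \<longrightarrow>
        S_action m z u X (toS_dom m X \<rho>) (toS_act m z u \<rho> act))
   \<and> (\<forall>(X :: 'x topology) D A. S_action m z u X D A \<longrightarrow>
        S_action_eq (toS_dom m X (toG_anchor m D)) (toS_act m z u (toG_anchor m D) (toG_act A)) D A)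
   \<and> (\<forall>(X :: 'x topology) \<rho> act. G_action m z u X \<rho> act \<longrightarrow>
        G_action_eq m z u X (toG_anchor m (toS_dom m X \<rho>)) (toG_act (toS_act m z u \<rho> act)) \<rho> act)
   \<and> (\<forall>(X :: 'x topology) (Y :: 'y topology) D A D' A' (f :: 'x \<Rightarrow> 'y).
        S_action m z u X D A \<and> S_action m z u Y D' A' \<and> continuous_map X Y f \<longrightarrow>
        (S_equivariant D A D' A' X f \<longleftrightarrow>
         G_equivariant m z u X (toG_anchor m D) (toG_act A) (toG_anchor m D') (toG_act A') f))
   \<and> (\<forall>(X :: 'x topology) (Y :: 'y topology) \<rho> act \<rho>' act' (f :: 'x \<Rightarrow> 'y).
        G_action m z u X \<rho> act \<and> G_action m z u Y \<rho>' act' \<and> continuous_map X Y f \<longrightarrow>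
        (G_equivariant m z u X \<rho> act \<rho>' act' f \<longleftrightarrow>
         S_equivariant (toS_dom m X \<rho>) (toS_act m z u \<rho> act) (toS_dom m Y \<rho>') (toS_act m z u \<rho>' act') X f))"
  by (intro conjI allI impI; (elim conjE)?)
    (simp_all add: assms S_space_iff G_space_iff S_space.G_action_toG G_space.S_action_toS
      S_space.S_action_eq_toS_toG G_space.G_action_eq_toG_toS S_equivariant_iff_G_equivariant
      G_equivariant_iff_S_equivariant continuous_map_funspace)

end
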